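(* Let $\mathcal{A}$ be a line arrangement in $\mathbb{P}^2_{\mathbb{C}}$ with $n=|\mathcal{A}|$. If $n\le 5$, then $\mathcal{A}$ is of type $\mathcal{C}_0$ or $\mathcal{C}_1$. If $n\le 6$, then $\mathcal{A}$ is of type $\mathcal{C}_0$, $\mathcal{C}_1$ or $\mathcal{C}_2$.
   Context: $\operatorname{mult}(\mathcal{A})$ is the set of points on at least three lines of $\mathcal{A}$. $\mathcal{A}$ is of type $\mathcal{C}_k$ if $k$ is the minimal number of lines of $\mathcal{A}$ whose union contains $\operatorname{mult}(\mathcal{A})$. *)

theory Defs
  imports Complex_Main
begin

text \<open>A point of P^2
  is represented by a nonzero vector of C^3 (any nonzero multiple represents the
  same point); a line is represented by a nonzero coefficient vector (a0,a1,a2),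
  namely the line a0 x0 + a1 x1 + a2 x2 = 0.\<close>

type_synonym hvec = "complex \<times> complex \<times> complex"

definition nonzero_hv :: "hvec \<Rightarrow> bool" where
  "nonzero_hv v \<longleftrightarrow> v \<noteq> (0, 0, 0)"

definition smult_hv :: "complex \<Rightarrow> hvec \<Rightarrow> hvec" where
  "smult_hv c v = (c * fst v, c * fst (snd v), c * snd (snd v))"

definition proportional :: "hvec \<Rightarrow> hvec \<Rightarrow> bool" where
  "proportional u v \<longleftrightarrow> (\<exists>c. c \<noteq> 0 \<and> v = smult_hv c u)"

definition on_line :: "hvec \<Rightarrow> hvec \<Rightarrow> bool" where
  "on_line p a \<longleftrightarrow>
     fst a * fst p + fst (snd a) * fst (snd p) + snd (snd a) * snd (snd p) = 0"

definition line_arrangement :: "hvec set \<Rightarrow> bool" where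
  "line_arrangement A \<longleftrightarrow> finite A \<and> (\<forall>a\<in>A. nonzero_hv a) \<and>
     (\<forall>a\<in>A. \<forall>b\<in>A. a \<noteq> b \<longrightarrow> \<not> proportional a b)"

text \<open>mult(A): points lying on at least three lines of A (as a set of
  homogeneous representatives).\<close>
definition mult_pts :: "hvec set \<Rightarrow> hvec set" where
  "mult_pts A = {p. nonzero_hv p \<and> card {a\<in>A. on_line p a} \<ge> 3}"

definition covers_mult :: "hvec set \<Rightarrow> hvec set \<Rightarrow> bool" where
  "covers_mult A B \<longleftrightarrow> (\<forall>p\<in>mult_pts A. \<exists>b\<in>B. on_line p b)"

definition type_C :: "hvec set \<Rightarrow> nat \<Rightarrow> bool" where
  "type_C A k \<longleftrightarrow>
     (\<exists>B\<subseteq>A. card B = k \<and> covers_mult A B) \<and>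
     (\<forall>B\<subseteq>A. covers_mult A B \<longrightarrow> card B \<ge> k)"

end

theory Submission imports Defs begin

(* Fix a multiple point p of A and let P be the set of
   lines of A through p, so |P| >= 3.  A multiple point q different from p
   lies on at most one line of P (two distinct points span one line), hence on
   at least two lines outside P.  If, apart from a set X of lines, at most two
   lines T of A avoid p, then every multiple point q not on X and different
   from p lies on both lines of T; as two distinct lines meet in only one
   point, all such q coincide, and the line of P through that point covers
   them.  So mult(A) is covered by X plus one line.  With n <= m + 5 lines one
   can choose |X| <= m, giving a cover by m + 1 lines; m = 0 and m = 1 yield
   the two claims, since the type of A is the least size of a cover. *)

(* Incidence is a symmetric bilinear condition: points and lines are dual. *)
lemma on_line_sym: "on_line p a \<longleftrightarrow> on_line a p"
  by (cases p; cases a) (auto simp: on_line_def mult.commute)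

lemma smult_hv_smult_hv: "smult_hv a (smult_hv b v) = smult_hv (a * b) v"
  by (simp add: smult_hv_def mult.assoc)

lemma on_line_proportional:
  assumes "proportional p q" "on_line p a"
  shows "on_line q a"
proof -
  obtain c where q: "q = smult_hv c p"
    using assms(1) by (auto simp: proportional_def)
  have "fst a * fst q + fst (snd a) * fst (snd q) + snd (snd a) * snd (snd q)
     = c * (fst a * fst p + fst (snd a) * fst (snd p) + snd (snd a) * snd (snd p))"
    by (simp add: q smult_hv_def algebra_simps)
  with assms(2) show ?thesis by (simp add: on_line_def)
qed

definition cross_hv :: "hvec \<Rightarrow> hvec \<Rightarrow> hvec" where
  "cross_hv u v =
     (fst (snd u) * snd (snd v) - snd (snd u) * fst (snd v),
      snd (snd u) * fst v - fst u * snd (snd v),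
      fst u * fst (snd v) - fst (snd u) * fst v)"

lemma cross_hv_eq_zero_multiple:
  assumes "nonzero_hv c" "cross_hv w c = (0, 0, 0)"
  shows "\<exists>t. w = smult_hv t c"
proof -
  obtain c1 c2 c3 w1 w2 w3 where v: "c = (c1, c2, c3)" "w = (w1, w2, w3)"
    by (metis prod.exhaust)
  have e: "w2 * c3 = w3 * c2" "w3 * c1 = w1 * c3" "w1 * c2 = w2 * c1"
    using assms(2) by (simp_all add: v cross_hv_def)
  consider "c1 \<noteq> 0" | "c2 \<noteq> 0" | "c3 \<noteq> 0"
    using assms(1) by (auto simp: v nonzero_hv_def)
  then show ?thesis
  proof cases
    case 1 with e show ?thesis
      by (intro exI[of _ "w1 / c1"]) (auto simp: v smult_hv_def field_simps)
  next
    case 2 with e show ?thesis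
      by (intro exI[of _ "w2 / c2"]) (auto simp: v smult_hv_def field_simps)
  next
    case 3 with e show ?thesis
      by (intro exI[of _ "w3 / c3"]) (auto simp: v smult_hv_def field_simps)
  qed
qed

lemma cross_hv_nonzero:
  assumes "nonzero_hv a" "nonzero_hv b" "\<not> proportional a b"
  shows "nonzero_hv (cross_hv a b)"
  unfolding nonzero_hv_def
proof
  assume "cross_hv a b = (0, 0, 0)"
  then have "cross_hv b a = (0, 0, 0)"
    by (cases a; cases b) (simp add: cross_hv_def algebra_simps)
  then obtain t where t: "b = smult_hv t a"
    using cross_hv_eq_zero_multiple[OF assms(1)] by blast
  with assms(2) have "t \<noteq> 0"
    by (auto simp: nonzero_hv_def smult_hv_def)
  with t assms(3) show False by (auto simp: proportional_def)
qed

(* Triple product expansion p x (a x b) = (b.p) a - (a.p) b, for p on a and b. *)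
lemma cross_hv_cross_hv_on_lines:
  assumes "on_line p a" "on_line p b"
  shows "cross_hv p (cross_hv a b) = (0, 0, 0)"
proof -
  obtain a1 a2 a3 b1 b2 b3 p1 p2 p3
    where v: "a = (a1, a2, a3)" "b = (b1, b2, b3)" "p = (p1, p2, p3)"
    by (metis prod.exhaust)
  define \<alpha> where "\<alpha> = a1 * p1 + a2 * p2 + a3 * p3"
  define \<beta> where "\<beta> = b1 * p1 + b2 * p2 + b3 * p3"
  have "cross_hv p (cross_hv a b) =
      (\<beta> * a1 - \<alpha> * b1, \<beta> * a2 - \<alpha> * b2, \<beta> * a3 - \<alpha> * b3)"
    by (simp add: v cross_hv_def \<alpha>_def \<beta>_def algebra_simps)
  moreover have "\<alpha> = 0" "\<beta> = 0"
    using assms by (simp_all add: v on_line_def \<alpha>_def \<beta>_def)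
  ultimately show ?thesis by simp
qed

(* Two distinct lines meet in at most one projective point.  Since incidence is
   symmetric, this also says that two distinct points span at most one line. *)
lemma unique_intersection:
  assumes "nonzero_hv a" "nonzero_hv b" "\<not> proportional a b"
    and "nonzero_hv p" "nonzero_hv q"
    and "on_line p a" "on_line p b" "on_line q a" "on_line q b"
  shows "proportional p q"
proof -
  let ?c = "cross_hv a b"
  have c: "nonzero_hv ?c" using cross_hv_nonzero[OF assms(1-3)] .
  obtain s where s: "p = smult_hv s ?c"
    using cross_hv_eq_zero_multiple[OF c cross_hv_cross_hv_on_lines[OF assms(6,7)]] by blast
  obtain t where t: "q = smult_hv t ?c"
    using cross_hv_eq_zero_multiple[OF c cross_hv_cross_hv_on_lines[OF assms(8,9)]] by blast
  have "s \<noteq> 0" "t \<noteq> 0"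
    using assms(4,5) s t by (auto simp: nonzero_hv_def smult_hv_def)
  then have "q = smult_hv (t / s) p"
    by (simp add: s t smult_hv_smult_hv)
  with \<open>s \<noteq> 0\<close> \<open>t \<noteq> 0\<close> show ?thesis
    unfolding proportional_def by (intro exI[of _ "t / s"]) simp
qed

lemma common_line_unique:
  assumes "line_arrangement A" "nonzero_hv p" "nonzero_hv q" "\<not> proportional p q"
    and "a \<in> A" "b \<in> A" "on_line p a" "on_line q a" "on_line p b" "on_line q b"
  shows "a = b"
proof (rule ccontr)
  assume "a \<noteq> b"
  with assms(1,5,6) have "nonzero_hv a" "nonzero_hv b" "\<not> proportional a b"
    by (auto simp: line_arrangement_def)
  with assms(7-10) have "proportional a b"
    by (intro unique_intersection[OF assms(2,3,4)]) (simp_all add: on_line_sym)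
  with \<open>\<not> proportional a b\<close> show False ..
qed

definition lines_through :: "hvec set \<Rightarrow> hvec \<Rightarrow> hvec set" where
  "lines_through A p = {a \<in> A. on_line p a}"

lemma card_lines_through_mult_pt:
  assumes "p \<in> mult_pts A"
  shows "nonzero_hv p" "card (lines_through A p) \<ge> 3"
  using assms by (simp_all add: mult_pts_def lines_through_def)

lemma lines_avoiding_other_mult_pt:
  assumes A: "line_arrangement A" and p: "p \<in> mult_pts A" and q: "q \<in> mult_pts A"
    and pq: "\<not> proportional p q"
  shows "card (lines_through A q - lines_through A p) \<ge> 2"
proof -
  let ?P = "lines_through A p" and ?Q = "lines_through A q"
  have fin: "finite ?Q" using A by (simp add: line_arrangement_def lines_through_def)
  have "card (?Q \<inter> ?P) \<le> 1"
    unfolding One_nat_def card_le_Suc0_iff_eq[OF finite_Int[OF disjI1[OF fin]]]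
    using common_line_unique[OF A card_lines_through_mult_pt(1)[OF p]
        card_lines_through_mult_pt(1)[OF q] pq]
    by (auto simp: card_le_Suc0_iff_eq lines_through_def)
  moreover have "card ?Q = card (?Q \<inter> ?P) + card (?Q - ?P)"
    using fin by (simp add: card_Int_Diff)
  ultimately show ?thesis using card_lines_through_mult_pt(2)[OF q] by linarith
qed

lemma mult_pt_on_remaining_lines:
  assumes A: "line_arrangement A" and p: "p \<in> mult_pts A" and q: "q \<in> mult_pts A"
    and pq: "\<not> proportional p q" and qX: "\<forall>x\<in>X. \<not> on_line q x"
    and T: "card (A - lines_through A p - X) \<le> 2"
  shows "lines_through A q - lines_through A p = A - lines_through A p - X"
    and "card (A - lines_through A p - X) = 2"
    and "\<exists>l\<in>lines_through A p. on_line q l"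
proof -
  let ?P = "lines_through A p" and ?Q = "lines_through A q" and ?T = "A - lines_through A p - X"
  have finT: "finite ?T" using A by (simp add: line_arrangement_def)
  have sub: "?Q - ?P \<subseteq> ?T" using qX by (auto simp: lines_through_def)
  have two: "card (?Q - ?P) \<ge> 2" using lines_avoiding_other_mult_pt[OF A p q pq] .
  with card_mono[OF finT sub] T show "card ?T = 2" by linarith
  with two show eq: "?Q - ?P = ?T" using card_seteq[OF finT sub] by linarith
  have "?Q \<inter> ?P \<noteq> {}"
  proof
    assume "?Q \<inter> ?P = {}"
    then have "?Q = ?T" using eq by blast
    with \<open>card ?T = 2\<close> card_lines_through_mult_pt(2)[OF q] show False by simp
  qed
  then show "\<exists>l\<in>?P. on_line q l" by (auto simp: lines_through_def)
qed

lemma cover_by_line_through_mult_pt: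
  assumes A: "line_arrangement A" and p: "p \<in> mult_pts A"
    and T: "card (A - lines_through A p - X) \<le> 2"
  shows "\<exists>l\<in>lines_through A p. \<forall>q\<in>mult_pts A. (\<exists>x\<in>X. on_line q x) \<or> on_line q l"
proof (cases "\<exists>q0\<in>mult_pts A. \<not> proportional p q0 \<and> (\<forall>x\<in>X. \<not> on_line q0 x)")
  case True
  then obtain q0 where q0: "q0 \<in> mult_pts A" "\<not> proportional p q0" "\<forall>x\<in>X. \<not> on_line q0 x"
    by blast
  note rem0 = mult_pt_on_remaining_lines[OF A p q0 T]
  obtain l where l: "l \<in> lines_through A p" "on_line q0 l" using rem0(3) by blast
  obtain a b where ab: "A - lines_through A p - X = {a, b}" "a \<noteq> b"
    using rem0(2) by (auto simp: card_2_iff)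
  have "(\<exists>x\<in>X. on_line q x) \<or> on_line q l" if q: "q \<in> mult_pts A" for q
  proof (rule ccontr)
    assume off: "\<not> ((\<exists>x\<in>X. on_line q x) \<or> on_line q l)"
    then have "\<not> proportional p q" "\<not> proportional q0 q"
      using on_line_proportional[of p q l] on_line_proportional[of q0 q l] l
      by (auto simp: lines_through_def)
    then have "lines_through A q - lines_through A p = {a, b}"
      using mult_pt_on_remaining_lines(1)[OF A p q _ _ T] off ab(1) by auto
    moreover have "lines_through A q0 - lines_through A p = {a, b}"
      using rem0(1) ab(1) by simp
    ultimately have "a \<in> lines_through A q0" "b \<in> lines_through A q0"
      "a \<in> lines_through A q" "b \<in> lines_through A q" by blast+
    then have "a = b"
      using common_line_unique[OF A card_lines_through_mult_pt(1)[OF q0(1)]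
          card_lines_through_mult_pt(1)[OF q] \<open>\<not> proportional q0 q\<close>, of a b]
      by (simp add: lines_through_def)
    with ab(2) show False ..
  qed
  with l(1) show ?thesis by blast
next
  case False
  obtain l where l: "l \<in> lines_through A p"
    using card_lines_through_mult_pt(2)[OF p] by (metis all_not_in_conv card.empty not_numeral_le_zero)
  then have "on_line q l" if "q \<in> mult_pts A" "\<forall>x\<in>X. \<not> on_line q x" for q
    using False that on_line_proportional[of p q l] by (auto simp: lines_through_def)
  with l show ?thesis by blast
qed

lemma small_cover:
  assumes A: "line_arrangement A" and n: "card A \<le> m + 5"
  shows "\<exists>B\<subseteq>A. card B \<le> m + 1 \<and> covers_mult A B"
proof (cases "mult_pts A = {}")
  case True
  then show ?thesis by (intro exI[of _ "{}"]) (simp add: covers_mult_def)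
next
  case False
  then obtain p where p: "p \<in> mult_pts A" by auto
  let ?R = "A - lines_through A p"
  have fin: "finite A" using A by (simp add: line_arrangement_def)
  have "card ?R = card A - card (lines_through A p)"
    using fin by (simp add: card_Diff_subset lines_through_def)
  with n card_lines_through_mult_pt(2)[OF p] have R: "card ?R \<le> m + 2" by linarith
  obtain X where X: "X \<subseteq> ?R" "card X = min m (card ?R)" "finite X"
    using obtain_subset_with_card_n[of "min m (card ?R)" ?R] by auto
  have "card (?R - X) = card ?R - card X"
    using X(1,3) by (simp add: card_Diff_subset)
  with R X(2) have "card (?R - X) \<le> 2" by linarith
  then obtain l where l: "l \<in> lines_through A p"
    and cov: "\<forall>q\<in>mult_pts A. (\<exists>x\<in>X. on_line q x) \<or> on_line q l"
    using cover_by_line_through_mult_pt[OF A p] by blast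
  have "insert l X \<subseteq> A" using l X(1) by (auto simp: lines_through_def)
  moreover have "card (insert l X) \<le> m + 1"
    using X(2,3) card_insert_le_m1[of "Suc m" X l] by (simp add: card_insert_if)
  moreover have "covers_mult A (insert l X)"
    using cov by (auto simp: covers_mult_def)
  ultimately show ?thesis by blast
qed

lemma type_C_le_cover:
  assumes "B \<subseteq> A" "covers_mult A B"
  shows "\<exists>k\<le>card B. type_C A k"
proof -
  let ?covers = "\<lambda>k. \<exists>B\<subseteq>A. card B = k \<and> covers_mult A B"
  define k where "k = (LEAST k. ?covers k)"
  have ex: "?covers (card B)" using assms by blast
  have "?covers k" unfolding k_def by (rule LeastI_ex) (use ex in blast)
  moreover have "\<forall>B\<subseteq>A. covers_mult A B \<longrightarrow> k \<le> card B"
    unfolding k_def by (auto intro: Least_le)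
  moreover have "k \<le> card B" unfolding k_def by (rule Least_le) (rule ex)
  ultimately show ?thesis unfolding type_C_def by blast
qed

lemma type_C_at_most:
  assumes "line_arrangement A" "card A \<le> m + 5"
  shows "\<exists>k\<le>m + 1. type_C A k"
proof -
  obtain B where "B \<subseteq> A" "card B \<le> m + 1" "covers_mult A B"
    using small_cover[OF assms] by blast
  then show ?thesis using type_C_le_cover by (meson order_trans)
qed

theorem mainTheorem11:
  fixes A :: "hvec set"
  assumes "line_arrangement A"
  shows "(card A \<le> 5 \<longrightarrow> type_C A 0 \<or> type_C A 1) \<and>
         (card A \<le> 6 \<longrightarrow> type_C A 0 \<or> type_C A 1 \<or> type_C A 2)"
proof (intro conjI impI)
  assume "card A \<le> 5"
  then have "\<exists>k\<le>1. type_C A k" using type_C_at_most[OF assms, of 0] by simp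
  then obtain k where "k \<le> 1" "type_C A k" by blast
  then show "type_C A 0 \<or> type_C A 1" by (cases k) auto
next
  assume "card A \<le> 6"
  then have "\<exists>k\<le>2. type_C A k" using type_C_at_most[OF assms, of 1] by (simp add: eval_nat_numeral)
  then obtain k where "k \<le> 2" "type_C A k" by blast
  moreover from \<open>k \<le> 2\<close> have "k = 0 \<or> k = 1 \<or> k = 2" by arith
  ultimately show "type_C A 0 \<or> type_C A 1 \<or> type_C A 2" by auto
qed

end
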